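(* Let $L$ be a finite self-dual lattice and let $W_1,W_2\subseteq L$ both contain all join-irreducible elements of $L$. Then the induced subgraphs $\nabla_L^{W_1}$ and $\nabla_L^{W_2}$ of the duality graph $\nabla_L$ are isomorphic if and only if there exists $\sigma\in\mathrm{Aut}(L)$ with $\sigma(W_1)=W_2$.
   Context: A self-dual lattice is a lattice $L$ with a map $a\mapsto a^\perp$ of $L$ to itself that is involutive and order-reversing. $\mathrm{Aut}(L)$ is the group of lattice automorphisms $\sigma$ of $L$ satisfying $\sigma(a^\perp)=\sigma(a)^\perp$ for all $a$. The duality graph $\nabla_L$ has vertex set $L$, with $a,b$ adjacent iff $a\le b^\perp$ (loops allowed); $\nabla_L^W$ is its induced subgraph on $W$ (vertex set $W$, inherited adjacency). An element $a$ is (completely) join-irreducible if $a=\bigvee A$ for a subset $A\subseteq L$ implies $a\in A$. *)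

theory Defs
  imports Main
begin

definition self_dual :: "('a::lattice \<Rightarrow> 'a) \<Rightarrow> bool" where
  "self_dual perp \<longleftrightarrow> (\<forall>a. perp (perp a) = a) \<and> (\<forall>a b. a \<le> b \<longrightarrow> perp b \<le> perp a)"

definition is_join :: "'a::order \<Rightarrow> 'a set \<Rightarrow> bool" where
  "is_join a A \<longleftrightarrow> (\<forall>x\<in>A. x \<le> a) \<and> (\<forall>u. (\<forall>x\<in>A. x \<le> u) \<longrightarrow> a \<le> u)"

definition join_irreducible :: "'a::order \<Rightarrow> bool" where
  "join_irreducible a \<longleftrightarrow> (\<forall>A. is_join a A \<longrightarrow> a \<in> A)"

definition sd_aut :: "('a::lattice \<Rightarrow> 'a) \<Rightarrow> ('a \<Rightarrow> 'a) \<Rightarrow> bool" where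
  "sd_aut perp \<sigma> \<longleftrightarrow> bij \<sigma> \<and> (\<forall>a b. \<sigma> (sup a b) = sup (\<sigma> a) (\<sigma> b))
     \<and> (\<forall>a b. \<sigma> (inf a b) = inf (\<sigma> a) (\<sigma> b)) \<and> (\<forall>a. \<sigma> (perp a) = perp (\<sigma> a))"

text \<open>Adjacency in the duality graph: a ~ b iff a \<le> b^perp (loops allowed).\<close>
definition dual_adj :: "('a::order \<Rightarrow> 'a) \<Rightarrow> 'a \<Rightarrow> 'a \<Rightarrow> bool" where
  "dual_adj perp a b \<longleftrightarrow> a \<le> perp b"

definition induced_dual_iso :: "('a::order \<Rightarrow> 'a) \<Rightarrow> 'a set \<Rightarrow> 'a set \<Rightarrow> bool" where
  "induced_dual_iso perp W1 W2 \<longleftrightarrow> (\<exists>f. bij_betw f W1 W2 \<and>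
     (\<forall>a\<in>W1. \<forall>b\<in>W1. dual_adj perp a b \<longleftrightarrow> dual_adj perp (f a) (f b)))"

end

theory Submission
  imports Defs
begin

text \<open>In a finite lattice every element is the join of the join-irreducibles below it, and
  self-duality turns order relations into adjacencies: \<open>a \<le> c\<close> holds iff every vertex
  adjacent to \<open>c\<close> is adjacent to \<open>a\<close>, and \<open>a\<close> is the join of \<open>S\<close> iff the neighbours of \<open>a\<close>
  are the common neighbours of \<open>S\<close>. Hence, as long as \<open>W\<close> contains the join-irreducibles, the
  induced graph on \<open>W\<close> recognises both the order on \<open>W\<close> and join-irreducibility. A graph
  isomorphism \<open>f : W\<^sub>1 \<rightarrow> W\<^sub>2\<close> therefore permutes the join-irreducibles, preserving
  adjacency among them. Encoding \<open>x\<close> by the set \<open>J(x)\<close> of join-irreducibles below it,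
  the set \<open>J(x\<^sup>\<perp>)\<close> is the polar of \<open>J(x)\<close> and every polar is of the form \<open>J(y)\<close>; so
  \<open>J(\<sigma> x) = f(J(x))\<close> defines an automorphism \<open>\<sigma>\<close> of the self-dual lattice extending \<open>f\<close>.\<close>

lemma wfp_less_finite: "wfP ((<) :: 'a::{finite,order} \<Rightarrow> 'a \<Rightarrow> bool)"
  by (rule strict_partial_order_wfp_on_finite_set) (auto intro: transp_onI)

lemma le_if_join_irreducibles_le:
  fixes x y :: "'a::{finite,order}"
  assumes "\<And>j. join_irreducible j \<Longrightarrow> j \<le> x \<Longrightarrow> j \<le> y"
  shows "x \<le> y"
  using assms
proof (induction x rule: wfp_induct_rule[OF wfp_less_finite])
  case (1 x)
  show ?case
  proof (cases "join_irreducible x")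
    case True
    with 1 show ?thesis by simp
  next
    case False
    then obtain A where A: "is_join x A" "x \<notin> A"
      unfolding join_irreducible_def by auto
    have "a \<le> y" if "a \<in> A" for a
    proof -
      have "a < x"
        using A that unfolding is_join_def by (metis order.not_eq_order_implies_strict)
      with 1 show ?thesis by (meson less_imp_le order_trans)
    qed
    with A show ?thesis unfolding is_join_def by blast
  qed
qed

definition ji_below :: "'a::order \<Rightarrow> 'a set" where
  "ji_below x = {j. join_irreducible j \<and> j \<le> x}"

lemma ji_below_subset_iff:
  fixes x y :: "'a::{finite,order}"
  shows "ji_below x \<subseteq> ji_below y \<longleftrightarrow> x \<le> y"
  unfolding ji_below_def by (auto intro: le_if_join_irreducibles_le order_trans)

lemma ji_below_inject:
  fixes x y :: "'a::{finite,order}"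
  shows "ji_below x = ji_below y \<Longrightarrow> x = y"
  by (metis ji_below_subset_iff order.antisym order.refl)

lemma is_join_ji_below:
  fixes x :: "'a::{finite,order}"
  shows "is_join x (ji_below x)"
  unfolding is_join_def ji_below_def by (auto intro: le_if_join_irreducibles_le order_trans)

lemma self_dual_perp_perp [simp]: "self_dual perp \<Longrightarrow> perp (perp a) = a"
  unfolding self_dual_def by blast

lemma self_dual_perp_le_iff: "self_dual perp \<Longrightarrow> perp b \<le> perp a \<longleftrightarrow> a \<le> b"
  unfolding self_dual_def by metis

lemma self_dual_le_perp_commute: "self_dual perp \<Longrightarrow> a \<le> perp b \<longleftrightarrow> b \<le> perp a"
  by (metis self_dual_perp_le_iff self_dual_perp_perp)

lemma is_join_le_perp_iff:
  fixes perp :: "'a::lattice \<Rightarrow> 'a"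
  assumes "self_dual perp" and "is_join a S"
  shows "y \<le> perp a \<longleftrightarrow> (\<forall>s\<in>S. y \<le> perp s)"
proof -
  have "y \<le> perp a \<longleftrightarrow> a \<le> perp y"
    using assms(1) by (rule self_dual_le_perp_commute)
  also have "\<dots> \<longleftrightarrow> (\<forall>s\<in>S. s \<le> perp y)"
    using assms(2) unfolding is_join_def by (meson order_trans)
  also have "\<dots> \<longleftrightarrow> (\<forall>s\<in>S. y \<le> perp s)"
    using self_dual_le_perp_commute[OF assms(1)] by blast
  finally show ?thesis .
qed

lemma le_iff_perp_neighbours:
  fixes perp :: "'a::{finite,lattice} \<Rightarrow> 'a"
  assumes "self_dual perp" and "{j. join_irreducible j} \<subseteq> W"
  shows "a \<le> c \<longleftrightarrow> (\<forall>y\<in>W. y \<le> perp c \<longrightarrow> y \<le> perp a)"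
proof -
  have "a \<le> c \<longleftrightarrow> perp c \<le> perp a"
    using assms(1) by (simp add: self_dual_perp_le_iff)
  also have "\<dots> \<longleftrightarrow> (\<forall>y\<in>W. y \<le> perp c \<longrightarrow> y \<le> perp a)"
    using assms(2) by (auto intro: le_if_join_irreducibles_le order_trans)
  finally show ?thesis .
qed

lemma is_join_if_perp_neighbours:
  fixes perp :: "'a::{finite,lattice} \<Rightarrow> 'a"
  assumes sd: "self_dual perp" and JW: "{j. join_irreducible j} \<subseteq> W"
    and neighbours: "\<forall>y\<in>W. y \<le> perp a \<longleftrightarrow> (\<forall>s\<in>S. y \<le> perp s)"
  shows "is_join a S"
  unfolding is_join_def
proof (intro conjI ballI allI impI)
  fix s
  assume "s \<in> S"
  with neighbours have "\<forall>y\<in>W. y \<le> perp a \<longrightarrow> y \<le> perp s" by blast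
  then show "s \<le> a"
    using le_iff_perp_neighbours[OF sd JW] by blast
next
  fix u
  assume "\<forall>s\<in>S. s \<le> u"
  then have "\<forall>y\<in>W. y \<le> perp u \<longrightarrow> (\<forall>s\<in>S. y \<le> perp s)"
    using self_dual_le_perp_commute[OF sd] by (meson order_trans)
  with neighbours show "a \<le> u"
    using le_iff_perp_neighbours[OF sd JW] by blast
qed

definition ji_polar :: "('a::order \<Rightarrow> 'a) \<Rightarrow> 'a set \<Rightarrow> 'a set" where
  "ji_polar perp S = {j. join_irreducible j \<and> (\<forall>k\<in>S. j \<le> perp k)}"

lemma ji_below_perp:
  fixes perp :: "'a::{finite,lattice} \<Rightarrow> 'a"
  assumes "self_dual perp"
  shows "ji_below (perp x) = ji_polar perp (ji_below x)"
  using is_join_le_perp_iff[OF assms is_join_ji_below]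
  unfolding ji_below_def ji_polar_def by blast

lemma ex_ji_below_eq_ji_polar:
  fixes perp :: "'a::{finite,lattice} \<Rightarrow> 'a"
  shows "\<exists>y. ji_below y = ji_polar perp S"
proof
  \<comment> \<open>the top element keeps the meet defined for \<open>S = {}\<close>\<close>
  let ?top = "Sup_fin (UNIV :: 'a set)"
  have "z \<le> ?top" for z
    by (simp add: Sup_fin.coboundedI)
  then show "ji_below (Inf_fin (insert ?top (perp ` S))) = ji_polar perp S"
    unfolding ji_below_def ji_polar_def by (auto simp: Inf_fin.bounded_iff)
qed

lemma sd_aut_le_iff:
  assumes "sd_aut perp \<sigma>"
  shows "\<sigma> x \<le> \<sigma> y \<longleftrightarrow> x \<le> y"
proof -
  have "inj \<sigma>" and "\<sigma> (inf x y) = inf (\<sigma> x) (\<sigma> y)"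
    using assms unfolding sd_aut_def bij_def by auto
  then show ?thesis
    by (metis inf.absorb_iff1 injD)
qed

lemma sd_aut_if_order_embedding:
  fixes \<sigma> :: "'a::{finite,lattice} \<Rightarrow> 'a"
  assumes le_iff: "\<And>x y. \<sigma> x \<le> \<sigma> y \<longleftrightarrow> x \<le> y"
    and perp: "\<And>x. \<sigma> (perp x) = perp (\<sigma> x)"
  shows "sd_aut perp \<sigma>"
proof -
  have "inj \<sigma>"
    by (rule injI) (metis le_iff order.antisym order.refl)
  then have "surj \<sigma>"
    by (simp add: finite_UNIV_inj_surj)
  have "\<sigma> (sup a b) = sup (\<sigma> a) (\<sigma> b)" for a b
  proof -
    obtain c where c: "sup (\<sigma> a) (\<sigma> b) = \<sigma> c"
      using \<open>surj \<sigma>\<close> by (metis surjD)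
    then have "sup a b \<le> c"
      using le_iff by (metis le_sup_iff order.refl)
    then have "\<sigma> (sup a b) \<le> sup (\<sigma> a) (\<sigma> b)"
      using c le_iff by simp
    moreover have "sup (\<sigma> a) (\<sigma> b) \<le> \<sigma> (sup a b)"
      using le_iff by simp
    ultimately show ?thesis by (rule order.antisym)
  qed
  moreover have "\<sigma> (inf a b) = inf (\<sigma> a) (\<sigma> b)" for a b
  proof -
    obtain c where c: "inf (\<sigma> a) (\<sigma> b) = \<sigma> c"
      using \<open>surj \<sigma>\<close> by (metis surjD)
    then have "c \<le> inf a b"
      using le_iff by (metis le_inf_iff order.refl)
    then have "inf (\<sigma> a) (\<sigma> b) \<le> \<sigma> (inf a b)"
      using c le_iff by simp
    moreover have "\<sigma> (inf a b) \<le> inf (\<sigma> a) (\<sigma> b)"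
      using le_iff by simp
    ultimately show ?thesis by (rule order.antisym[rotated])
  qed
  ultimately show ?thesis
    using \<open>inj \<sigma>\<close> \<open>surj \<sigma>\<close> perp unfolding sd_aut_def bij_def by blast
qed

definition dual_iso_on :: "('a::order \<Rightarrow> 'a) \<Rightarrow> ('a \<Rightarrow> 'a) \<Rightarrow> 'a set \<Rightarrow> 'a set \<Rightarrow> bool" where
  "dual_iso_on perp f W1 W2 \<longleftrightarrow> bij_betw f W1 W2 \<and>
     (\<forall>a\<in>W1. \<forall>b\<in>W1. f a \<le> perp (f b) \<longleftrightarrow> a \<le> perp b)"

lemma induced_dual_iso_iff: "induced_dual_iso perp W1 W2 \<longleftrightarrow> (\<exists>f. dual_iso_on perp f W1 W2)"
  unfolding induced_dual_iso_def dual_iso_on_def dual_adj_def by (simp add: eq_commute)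

lemma dual_iso_on_inv_into:
  assumes "dual_iso_on perp f W1 W2"
  shows "dual_iso_on perp (inv_into W1 f) W2 W1"
proof -
  have f: "bij_betw f W1 W2" and adj: "\<forall>a\<in>W1. \<forall>b\<in>W1. f a \<le> perp (f b) \<longleftrightarrow> a \<le> perp b"
    using assms unfolding dual_iso_on_def by auto
  have "bij_betw (inv_into W1 f) W2 W1"
    using f by (rule bij_betw_inv_into)
  moreover have "inv_into W1 f a \<le> perp (inv_into W1 f b) \<longleftrightarrow> a \<le> perp b"
    if "a \<in> W2" "b \<in> W2" for a b
    using adj bij_betw_inv_into_right[OF f] bij_betwE[OF \<open>bij_betw (inv_into W1 f) W2 W1\<close>] that
    by metis
  ultimately show ?thesis
    unfolding dual_iso_on_def by blast
qed

lemma dual_iso_on_subset: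
  assumes "dual_iso_on perp f W1 W2" and "V \<subseteq> W1"
  shows "dual_iso_on perp f V (f ` V)"
  using assms unfolding dual_iso_on_def bij_betw_def by (auto intro: inj_on_subset)

lemma dual_iso_on_le_iff:
  fixes perp :: "'a::{finite,lattice} \<Rightarrow> 'a"
  assumes sd: "self_dual perp" and J1: "{j. join_irreducible j} \<subseteq> W1"
    and J2: "{j. join_irreducible j} \<subseteq> W2" and f: "dual_iso_on perp f W1 W2"
    and a: "a \<in> W1" and c: "c \<in> W1"
  shows "f a \<le> f c \<longleftrightarrow> a \<le> c"
proof -
  have W2: "f ` W1 = W2" and adj: "\<And>x y. x \<in> W1 \<Longrightarrow> y \<in> W1 \<Longrightarrow> f x \<le> perp (f y) \<longleftrightarrow> x \<le> perp y"
    using f unfolding dual_iso_on_def bij_betw_def by auto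
  have "f a \<le> f c \<longleftrightarrow> (\<forall>y\<in>W2. y \<le> perp (f c) \<longrightarrow> y \<le> perp (f a))"
    by (rule le_iff_perp_neighbours[OF sd J2])
  also have "\<dots> \<longleftrightarrow> (\<forall>y\<in>W1. f y \<le> perp (f c) \<longrightarrow> f y \<le> perp (f a))"
    unfolding W2[symmetric] by blast
  also have "\<dots> \<longleftrightarrow> (\<forall>y\<in>W1. y \<le> perp c \<longrightarrow> y \<le> perp a)"
    using adj a c by blast
  also have "\<dots> \<longleftrightarrow> a \<le> c"
    by (rule le_iff_perp_neighbours[OF sd J1, symmetric])
  finally show ?thesis .
qed

lemma dual_iso_on_join_irreducible:
  fixes perp :: "'a::{finite,lattice} \<Rightarrow> 'a"
  assumes sd: "self_dual perp" and J1: "{j. join_irreducible j} \<subseteq> W1"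
    and J2: "{j. join_irreducible j} \<subseteq> W2" and f: "dual_iso_on perp f W1 W2"
    and "a \<in> W1" and "join_irreducible a"
  shows "join_irreducible (f a)"
proof (rule ccontr)
  assume "\<not> join_irreducible (f a)"
  then have fa_notin: "f a \<notin> ji_below (f a)"
    unfolding ji_below_def by blast
  have below_W2: "ji_below (f a) \<subseteq> W2"
    using J2 unfolding ji_below_def by blast
  have adj: "\<forall>x\<in>W1. \<forall>y\<in>W1. f x \<le> perp (f y) \<longleftrightarrow> x \<le> perp y"
    using f unfolding dual_iso_on_def by blast
  define S where "S = inv_into W1 f ` ji_below (f a)"
  have S_W1: "S \<subseteq> W1" and fS: "f ` S = ji_below (f a)"
    using f below_W2 unfolding S_def dual_iso_on_def bij_betw_def
    by (auto simp: inv_into_into image_image f_inv_into_f subset_eq)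
  have "\<forall>y\<in>W1. y \<le> perp a \<longleftrightarrow> (\<forall>s\<in>S. y \<le> perp s)"
  proof
    fix y
    assume "y \<in> W1"
    have "y \<le> perp a \<longleftrightarrow> f y \<le> perp (f a)"
      using adj \<open>y \<in> W1\<close> \<open>a \<in> W1\<close> by simp
    also have "\<dots> \<longleftrightarrow> (\<forall>s\<in>f ` S. f y \<le> perp s)"
      unfolding fS by (rule is_join_le_perp_iff[OF sd is_join_ji_below])
    also have "\<dots> \<longleftrightarrow> (\<forall>s\<in>S. y \<le> perp s)"
      using adj \<open>y \<in> W1\<close> S_W1 by auto
    finally show "y \<le> perp a \<longleftrightarrow> (\<forall>s\<in>S. y \<le> perp s)" .
  qed
  then have "is_join a S"
    by (rule is_join_if_perp_neighbours[OF sd J1])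
  with \<open>join_irreducible a\<close> have "f a \<in> f ` S"
    unfolding join_irreducible_def by blast
  with fa_notin fS show False by simp
qed

lemma dual_iso_on_image_join_irreducibles:
  fixes perp :: "'a::{finite,lattice} \<Rightarrow> 'a"
  assumes sd: "self_dual perp" and J1: "{j. join_irreducible j} \<subseteq> W1"
    and J2: "{j. join_irreducible j} \<subseteq> W2" and f: "dual_iso_on perp f W1 W2"
  shows "f ` {j. join_irreducible j} = {j. join_irreducible j}"
proof
  show "f ` {j. join_irreducible j} \<subseteq> {j. join_irreducible j}"
    using dual_iso_on_join_irreducible[OF assms] J1 by blast
  show "{j. join_irreducible j} \<subseteq> f ` {j. join_irreducible j}"
  proof
    fix b :: 'a
    assume b: "b \<in> {j. join_irreducible j}"
    then have "b \<in> W2"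
      using J2 by blast
    let ?g = "inv_into W1 f"
    have "join_irreducible (?g b)"
      using dual_iso_on_join_irreducible[OF sd J2 J1 dual_iso_on_inv_into[OF f] \<open>b \<in> W2\<close>] b
      by simp
    moreover have "f (?g b) = b"
      using f \<open>b \<in> W2\<close> unfolding dual_iso_on_def by (metis bij_betw_imp_surj_on f_inv_into_f)
    ultimately show "b \<in> f ` {j. join_irreducible j}"
      by (intro image_eqI[where x = "?g b"]) simp_all
  qed
qed

lemma dual_iso_on_ji_below:
  fixes perp :: "'a::{finite,lattice} \<Rightarrow> 'a"
  assumes sd: "self_dual perp" and J1: "{j. join_irreducible j} \<subseteq> W1"
    and J2: "{j. join_irreducible j} \<subseteq> W2" and f: "dual_iso_on perp f W1 W2"
    and "a \<in> W1"
  shows "ji_below (f a) = f ` ji_below a"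
proof -
  have fJ: "f ` {j. join_irreducible j} = {j. join_irreducible j}"
    by (rule dual_iso_on_image_join_irreducibles[OF sd J1 J2 f])
  have le_iff: "f j \<le> f a \<longleftrightarrow> j \<le> a" if "join_irreducible j" for j
    using dual_iso_on_le_iff[OF sd J1 J2 f] J1 that \<open>a \<in> W1\<close> by blast
  have "ji_below (f a) = {k \<in> f ` {j. join_irreducible j}. k \<le> f a}"
    unfolding ji_below_def fJ by simp
  also have "\<dots> = f ` {j. join_irreducible j \<and> f j \<le> f a}"
    by auto
  also have "\<dots> = f ` ji_below a"
    using le_iff by (auto simp: ji_below_def)
  finally show ?thesis .
qed

lemma dual_iso_on_image_ji_polar:
  assumes g: "dual_iso_on perp g J J" and "S \<subseteq> J" and J: "J = {j. join_irreducible j}"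
  shows "g ` ji_polar perp S = ji_polar perp (g ` S)"
proof -
  have gJ: "g ` J = J" and adj: "\<And>a b. a \<in> J \<Longrightarrow> b \<in> J \<Longrightarrow> g a \<le> perp (g b) \<longleftrightarrow> a \<le> perp b"
    using g unfolding dual_iso_on_def bij_betw_def by auto
  have polar: "ji_polar perp T = {j\<in>J. \<forall>k\<in>T. j \<le> perp k}" for T
    unfolding ji_polar_def J by simp
  have "j \<in> J \<Longrightarrow> (\<forall>k\<in>S. g j \<le> perp (g k)) \<longleftrightarrow> (\<forall>k\<in>S. j \<le> perp k)" for j
    using adj \<open>S \<subseteq> J\<close> by blast
  then have "g ` {j\<in>J. \<forall>k\<in>S. j \<le> perp k} = {j\<in>g ` J. \<forall>k\<in>S. j \<le> perp (g k)}"
    by auto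
  then show ?thesis
    unfolding polar gJ by simp
qed

lemma ex_sd_aut_extending_dual_iso_on_join_irreducibles:
  fixes perp :: "'a::{finite,lattice} \<Rightarrow> 'a"
  assumes sd: "self_dual perp" and g: "dual_iso_on perp g J J"
    and J: "J = {j. join_irreducible j}"
  shows "\<exists>\<sigma>. sd_aut perp \<sigma> \<and> (\<forall>x. ji_below (\<sigma> x) = g ` ji_below x)"
proof -
  have below_J: "ji_below x \<subseteq> J" for x
    unfolding J ji_below_def by blast
  have "\<exists>y. ji_below y = g ` ji_below x" for x
  proof -
    have "g ` ji_below x = g ` ji_polar perp (ji_below (perp x))"
      using ji_below_perp[OF sd, of "perp x"] sd by simp
    also have "\<dots> = ji_polar perp (g ` ji_below (perp x))"
      by (rule dual_iso_on_image_ji_polar[OF g below_J J])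
    finally show ?thesis
      by (metis ex_ji_below_eq_ji_polar)
  qed
  then obtain \<sigma> where \<sigma>: "\<And>x. ji_below (\<sigma> x) = g ` ji_below x"
    by metis
  have "inj_on g J"
    using g unfolding dual_iso_on_def bij_betw_def by blast
  have "\<sigma> x \<le> \<sigma> y \<longleftrightarrow> x \<le> y" for x y
  proof -
    have "\<sigma> x \<le> \<sigma> y \<longleftrightarrow> ji_below (\<sigma> x) \<subseteq> ji_below (\<sigma> y)"
      by (rule ji_below_subset_iff[symmetric])
    also have "\<dots> \<longleftrightarrow> ji_below x \<subseteq> ji_below y"
      unfolding \<sigma> using inj_on_image_mem_iff[OF \<open>inj_on g J\<close>] below_J by blast
    also have "\<dots> \<longleftrightarrow> x \<le> y"
      by (rule ji_below_subset_iff)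
    finally show ?thesis .
  qed
  moreover have "\<sigma> (perp x) = perp (\<sigma> x)" for x
  proof (rule ji_below_inject)
    have "ji_below (\<sigma> (perp x)) = g ` ji_polar perp (ji_below x)"
      by (simp add: \<sigma> ji_below_perp[OF sd])
    also have "\<dots> = ji_polar perp (ji_below (\<sigma> x))"
      by (simp add: \<sigma> dual_iso_on_image_ji_polar[OF g below_J J])
    finally show "ji_below (\<sigma> (perp x)) = ji_below (perp (\<sigma> x))"
      by (simp add: ji_below_perp[OF sd])
  qed
  ultimately show ?thesis
    using \<sigma> sd_aut_if_order_embedding by blast
qed

lemma dual_iso_on_sd_aut:
  assumes "sd_aut perp \<sigma>"
  shows "dual_iso_on perp \<sigma> W (\<sigma> ` W)"
  using assms sd_aut_le_iff[OF assms] unfolding sd_aut_def dual_iso_on_def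
  by (metis bij_betw_subset subset_UNIV)

theorem mainTheorem19:
  fixes perp :: "'a::{finite, lattice} \<Rightarrow> 'a"
    and W1 W2 :: "'a set"
  assumes "self_dual perp"
    and "{a. join_irreducible a} \<subseteq> W1"
    and "{a. join_irreducible a} \<subseteq> W2"
  shows "induced_dual_iso perp W1 W2 \<longleftrightarrow> (\<exists>\<sigma>. sd_aut perp \<sigma> \<and> \<sigma> ` W1 = W2)"
proof
  assume "induced_dual_iso perp W1 W2"
  then obtain f where f: "dual_iso_on perp f W1 W2"
    unfolding induced_dual_iso_iff by blast
  let ?J = "{a. join_irreducible a}"
  have "dual_iso_on perp f ?J ?J"
    using dual_iso_on_subset[OF f assms(2)] dual_iso_on_image_join_irreducibles[OF assms f]
    by simp
  then obtain \<sigma> where "sd_aut perp \<sigma>" and \<sigma>: "\<And>x. ji_below (\<sigma> x) = f ` ji_below x"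
    using ex_sd_aut_extending_dual_iso_on_join_irreducibles[OF assms(1)] by blast
  moreover have "\<sigma> a = f a" if "a \<in> W1" for a
    using \<sigma> dual_iso_on_ji_below[OF assms f that] by (metis ji_below_inject)
  then have "\<sigma> ` W1 = W2"
    using f unfolding dual_iso_on_def bij_betw_def by simp
  ultimately show "\<exists>\<sigma>. sd_aut perp \<sigma> \<and> \<sigma> ` W1 = W2" by blast
next
  assume "\<exists>\<sigma>. sd_aut perp \<sigma> \<and> \<sigma> ` W1 = W2"
  then show "induced_dual_iso perp W1 W2"
    unfolding induced_dual_iso_iff by (metis dual_iso_on_sd_aut)
qed

end
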